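(* There is a universal constant $K$ such that for every network $G(V)$ with $|V|\ge2$, writing $\gamma_2=\gamma_2(V,\sqrt{R_{\mathrm{eff}}})$, for all $u\ge16$, $$\sum_{v\in V}e^{-u\,c_v\,\gamma_2^2}\le K\,e^{-u/8}.$$
   Context: A network is a finite connected graph $G=(V,E)$ with symmetric conductances $c_{xy}\ge0$, $c_{xy}>0$ iff $xy\in E$; $c_v=\sum_yc_{vy}$; $R_{\mathrm{eff}}$ is effective resistance and $\sqrt{R_{\mathrm{eff}}}$ is the metric $(x,y)\mapsto\sqrt{R_{\mathrm{eff}}(x,y)}$. Talagrand's functional: with $M_0=1$, $M_k=2^{2^k}$, an admissible sequence is a nested sequence of partitions $\{\mathcal A_k\}_{k\ge0}$ ($\mathcal A_{k+1}$ refines $\mathcal A_k$) with $|\mathcal A_k|\le M_k$; $\gamma_2(X,d)=\inf\sup_{x}\sum_{k\ge0}2^{k/2}\mathrm{diam}(A_k(x))$ over admissible sequences, $A_k(x)$ the block of $\mathcal A_k$ containing $x$. *)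

theory Defs
  imports "HOL-Analysis.Analysis"
begin

definition network :: "'a set \<Rightarrow> ('a \<Rightarrow> 'a \<Rightarrow> real) \<Rightarrow> bool" where
  "network V c \<longleftrightarrow> finite V \<and>
     (\<forall>x y. c x y = c y x) \<and> (\<forall>x y. 0 \<le> c x y) \<and> (\<forall>x. c x x = 0) \<and>
     (\<forall>x y. 0 < c x y \<longrightarrow> x \<in> V \<and> y \<in> V) \<and>
     (\<forall>x\<in>V. \<forall>y\<in>V. (\<lambda>a b. a \<in> V \<and> b \<in> V \<and> 0 < c a b)\<^sup>*\<^sup>* x y)"

definition cond_at :: "'a set \<Rightarrow> ('a \<Rightarrow> 'a \<Rightarrow> real) \<Rightarrow> 'a \<Rightarrow> real" where
  "cond_at V c v = (\<Sum>y\<in>V. c v y)"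

definition energy :: "'a set \<Rightarrow> ('a \<Rightarrow> 'a \<Rightarrow> real) \<Rightarrow> ('a \<Rightarrow> real) \<Rightarrow> real" where
  "energy V c f = (1/2) * (\<Sum>x\<in>V. \<Sum>y\<in>V. c x y * (f x - f y)^2)"

text \<open>Effective resistance via the Dirichlet principle:
  R_eff(x,y)^{-1} = inf { E(f) : f x = 1, f y = 0 } for x \<noteq> y, and R_eff(x,x) = 0.\<close>
definition R_eff :: "'a set \<Rightarrow> ('a \<Rightarrow> 'a \<Rightarrow> real) \<Rightarrow> 'a \<Rightarrow> 'a \<Rightarrow> real" where
  "R_eff V c x y = (if x = y then 0
     else 1 / Inf {energy V c f | f. f x = 1 \<and> f y = 0})"

definition diam_R :: "'a set \<Rightarrow> ('a \<Rightarrow> 'a \<Rightarrow> real) \<Rightarrow> 'a set \<Rightarrow> real" where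
  "diam_R V c A = (if A = {} then 0 else Sup {sqrt (R_eff V c x y) | x y. x \<in> A \<and> y \<in> A})"

definition M_card :: "nat \<Rightarrow> nat" where
  "M_card k = (if k = 0 then 1 else 2 ^ (2 ^ k))"

definition is_partition :: "'a set \<Rightarrow> 'a set set \<Rightarrow> bool" where
  "is_partition V P \<longleftrightarrow> (\<forall>A\<in>P. A \<noteq> {}) \<and> \<Union>P = V \<and>
     (\<forall>A\<in>P. \<forall>B\<in>P. A \<noteq> B \<longrightarrow> A \<inter> B = {})"

definition refines :: "'a set set \<Rightarrow> 'a set set \<Rightarrow> bool" where
  "refines P Q \<longleftrightarrow> (\<forall>A\<in>P. \<exists>B\<in>Q. A \<subseteq> B)"

definition admissible :: "'a set \<Rightarrow> (nat \<Rightarrow> 'a set set) \<Rightarrow> bool" where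
  "admissible V \<A> \<longleftrightarrow> (\<forall>k. is_partition V (\<A> k) \<and> card (\<A> k) \<le> M_card k \<and>
     refines (\<A> (Suc k)) (\<A> k))"

definition block :: "'a set set \<Rightarrow> 'a \<Rightarrow> 'a set" where
  "block P x = (THE A. A \<in> P \<and> x \<in> A)"

definition gamma2 :: "'a set \<Rightarrow> ('a \<Rightarrow> 'a \<Rightarrow> real) \<Rightarrow> real" where
  "gamma2 V c = real_of_ereal (INF \<A> \<in> {\<A>. admissible V \<A>}.
      SUP x \<in> V. SUP n. ereal (\<Sum>k<n. 2 powr (real k / 2) * diam_R V c (block (\<A> k) x)))"

end

theory Submission
  imports Defs
begin

(*
  Write gamma = gamma2 V c and s_v = c_v * gamma^2.  The sum
  sum_v exp (-u s_v) is small as soon as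
    (a) s_v >= 1 for every vertex v, and
    (b) at most 4^j vertices satisfy s_v <= j, for every j >= 1;
  indeed (a) lets us extract the factor exp (-u/8) and (b) makes the
  remaining sum a convergent geometric series, giving the constant K = 16.

  Both (a) and (b) follow from a Sudakov-type lower bound for gamma_2: if
  S is a set of more than M_k points with pairwise R_eff >= r, then any
  admissible sequence must put two of them into one block of A_k, whence
  2^k r <= gamma^2.  It is combined with the Dirichlet-principle estimate
  R_eff(x,y) >= 1/c_x (test the indicator function of x), which needs the
  connectivity of the network to keep the energy infimum positive.
*)

section \<open>Blocks of partitions and diameters\<close>

lemma block_eq:
  assumes "is_partition V P" "A \<in> P" "x \<in> A"
  shows "block P x = A"
proof -
  have "B = A" if "B \<in> P" "x \<in> B" for B
    using assms that unfolding is_partition_def by blast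
  then show ?thesis
    unfolding block_def using assms(2,3) by (intro the_equality) blast+
qed

lemma block_in:
  assumes "is_partition V P" "x \<in> V"
  shows "block P x \<in> P" "x \<in> block P x"
proof -
  obtain A where "A \<in> P" "x \<in> A"
    using assms unfolding is_partition_def by blast
  then show "block P x \<in> P" "x \<in> block P x"
    using block_eq[OF assms(1)] by simp_all
qed

lemma block_subset:
  assumes "is_partition V P" "x \<in> V"
  shows "block P x \<subseteq> V"
  using block_in[OF assms] assms(1) unfolding is_partition_def by blast

lemma partition_finite: "is_partition V P \<Longrightarrow> finite V \<Longrightarrow> finite P"
  unfolding is_partition_def using finite_UnionD by auto

lemma diam_ge:
  assumes "finite A" "x \<in> A" "y \<in> A"
  shows "sqrt (R_eff V c x y) \<le> diam_R V c A"
proof -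
  let ?D = "{sqrt (R_eff V c x y) | x y. x \<in> A \<and> y \<in> A}"
  have "finite ?D"
    by (rule finite_image_set2) (use assms(1) in simp_all)
  moreover have "sqrt (R_eff V c x y) \<in> ?D"
    using assms by blast
  ultimately have "sqrt (R_eff V c x y) \<le> Sup ?D"
    by (intro cSup_upper bdd_above_finite)
  then show ?thesis
    using assms unfolding diam_R_def by auto
qed

lemma diam_nonneg:
  assumes "finite A"
  shows "0 \<le> diam_R V c A"
proof (cases "A = {}")
  case True
  then show ?thesis by (simp add: diam_R_def)
next
  case False
  then obtain a where "a \<in> A" by auto
  with diam_ge[OF assms this this, of V c] show ?thesis
    by (simp add: R_eff_def)
qed

lemma diam_singleton: "diam_R V c {x} = 0"
proof -
  have "{sqrt (R_eff V c a b) | a b. a \<in> {x} \<and> b \<in> {x}} = {0}"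
    by (auto simp: R_eff_def)
  then show ?thesis by (simp add: diam_R_def)
qed


section \<open>A lower bound for Talagrand's functional\<close>

abbreviation talagrand_sum ::
    "'a set \<Rightarrow> ('a \<Rightarrow> 'a \<Rightarrow> real) \<Rightarrow> (nat \<Rightarrow> 'a set set) \<Rightarrow> 'a \<Rightarrow> nat \<Rightarrow> real" where
  "talagrand_sum V c A x n \<equiv> (\<Sum>k<n. 2 powr (real k / 2) * diam_R V c (block (A k) x))"

lemma talagrand_sum_ge:
  assumes adm: "admissible V A" and fin: "finite V"
    and x: "x \<in> V" and y: "y \<in> block (A k) x"
  shows "2 powr (real k / 2) * sqrt (R_eff V c x y) \<le> talagrand_sum V c A x (Suc k)"
proof -
  have part: "is_partition V (A j)" for j
    using adm unfolding admissible_def by auto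
  have finite_block: "finite (block (A j) x)" for j
    using block_subset[OF part x] fin finite_subset by blast
  have "2 powr (real k / 2) * sqrt (R_eff V c x y)
      \<le> 2 powr (real k / 2) * diam_R V c (block (A k) x)"
    using diam_ge[OF finite_block block_in(2)[OF part x] y] by (intro mult_left_mono) auto
  also have "\<dots> \<le> talagrand_sum V c A x k + 2 powr (real k / 2) * diam_R V c (block (A k) x)"
    using diam_nonneg[OF finite_block] by (auto intro!: sum_nonneg)
  finally show ?thesis by simp
qed

lemma pigeonhole_block:
  assumes adm: "admissible V A" and fin: "finite V"
    and S: "S \<subseteq> V" "M_card k < card S"
  shows "\<exists>x\<in>S. \<exists>y\<in>S. x \<noteq> y \<and> y \<in> block (A k) x"
proof (rule ccontr)
  assume separated: "\<not> ?thesis"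
  have part: "is_partition V (A k)" and card_A: "card (A k) \<le> M_card k"
    using adm unfolding admissible_def by auto
  have "inj_on (block (A k)) S"
  proof (rule inj_onI)
    fix x y assume xy: "x \<in> S" "y \<in> S" "block (A k) x = block (A k) y"
    then have "y \<in> block (A k) x"
      using block_in(2)[OF part] S(1) by auto
    then show "x = y"
      using separated xy(1,2) by blast
  qed
  moreover have "block (A k) ` S \<subseteq> A k"
    using block_in(1)[OF part] S(1) by auto
  ultimately have "card S \<le> card (A k)"
    using card_inj_on_le partition_finite[OF part fin] by blast
  then show False using card_A S(2) by linarith
qed

text \<open>On a finite nonempty set there is an admissible sequence with bounded
  partial sums: the trivial partition up to level card V, singletons after.
  It guarantees that the infimum defining gamma2 is finite.\<close>

lemma bounded_admissible_exists:
  assumes fin: "finite V" and ne: "V \<noteq> {}"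
  shows "\<exists>A B. admissible V A \<and> (\<forall>x\<in>V. \<forall>n. talagrand_sum V c A x n \<le> B)"
proof -
  define k0 where "k0 = Suc (card V)"
  define S where "S = (\<lambda>x. {x}) ` V"
  define A where "A = (\<lambda>k::nat. if k < k0 then {V} else S)"
  have part_V: "is_partition V {V}" using ne unfolding is_partition_def by auto
  have part_S: "is_partition V S" unfolding is_partition_def S_def by auto
  have card_S: "card S \<le> 2 ^ (2 ^ k)" if "k0 \<le> k" for k
  proof -
    have "card S \<le> card V" unfolding S_def by (rule card_image_le[OF fin])
    also have "\<dots> < k" using that k0_def by simp
    also have "k < 2 ^ k" by (rule less_exp)
    also have "2 ^ k < (2::nat) ^ (2 ^ k)" by (rule less_exp)
    finally show ?thesis by simp
  qed
  have adm: "admissible V A"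
    unfolding admissible_def
  proof (intro allI conjI)
    fix k
    show "is_partition V (A k)" using part_V part_S unfolding A_def by auto
    show "card (A k) \<le> M_card k"
      using card_S[of k] unfolding A_def M_card_def k0_def by auto
    show "refines (A (Suc k)) (A k)"
      unfolding refines_def A_def S_def by auto
  qed
  define f where "f = (\<lambda>k. if k < k0 then 2 powr (real k / 2) * diam_R V c V else 0)"
  have f_nonneg: "0 \<le> f k" for k
    unfolding f_def using diam_nonneg[OF fin] by auto
  have "talagrand_sum V c A x n \<le> sum f {..<k0}" if x: "x \<in> V" for x n
  proof -
    have "block (A k) x = (if k < k0 then V else {x})" for k
      using block_eq[OF part_V _ x] block_eq[OF part_S, of "{x}" x] x
      unfolding A_def S_def by auto
    then have "talagrand_sum V c A x n = sum f {..<n}"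
      by (intro sum.cong) (auto simp: f_def diam_singleton)
    also have "\<dots> = sum f ({..<n} \<inter> {..<k0})"
      by (rule sum.mono_neutral_right) (auto simp: f_def)
    also have "\<dots> \<le> sum f {..<k0}"
      by (rule sum_mono2) (auto simp: f_nonneg)
    finally show ?thesis .
  qed
  then show ?thesis using adm by blast
qed

lemma gamma2_lower_bound:
  assumes fin: "finite V" and ne: "V \<noteq> {}"
    and beaten: "\<forall>A. admissible V A \<longrightarrow> (\<exists>x\<in>V. \<exists>n. L \<le> talagrand_sum V c A x n)"
  shows "L \<le> gamma2 V c"
proof -
  define F where "F = (\<lambda>A. SUP x\<in>V. SUP n. ereal (talagrand_sum V c A x n))"
  define I where "I = (INF A\<in>{A. admissible V A}. F A)"
  have lower: "ereal L \<le> I"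
    unfolding I_def
  proof (rule INF_greatest)
    fix A assume "A \<in> {A. admissible V A}"
    then obtain x n where "x \<in> V" "L \<le> talagrand_sum V c A x n"
      using beaten by auto
    then have "ereal L \<le> (SUP n. ereal (talagrand_sum V c A x n))"
      by (intro SUP_upper2[of n]) auto
    also have "\<dots> \<le> F A" unfolding F_def using \<open>x \<in> V\<close> by (rule SUP_upper)
    finally show "ereal L \<le> F A" .
  qed
  obtain A0 B where A0: "admissible V A0" "\<forall>x\<in>V. \<forall>n. talagrand_sum V c A0 x n \<le> B"
    using bounded_admissible_exists[OF fin ne] by blast
  have "F A0 \<le> ereal B"
    unfolding F_def using A0(2) by (intro SUP_least) auto
  then have upper: "I \<le> ereal B"
    unfolding I_def using A0(1) by (intro INF_lower2[of A0]) auto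
  obtain r where r: "I = ereal r"
    using lower upper by (cases I) auto
  have "gamma2 V c = r"
    unfolding gamma2_def using r unfolding I_def F_def by simp
  then show ?thesis using lower r by simp
qed

lemma separated_set_gamma2:
  assumes fin: "finite V" and S: "S \<subseteq> V" "M_card k < card S" and r: "0 \<le> r"
    and sep: "\<forall>x\<in>S. \<forall>y\<in>S. x \<noteq> y \<longrightarrow> r \<le> R_eff V c x y"
  shows "2 ^ k * r \<le> (gamma2 V c)^2"
proof -
  have "V \<noteq> {}" using S by auto
  have "sqrt (2 ^ k * r) \<le> gamma2 V c"
  proof (rule gamma2_lower_bound[OF fin \<open>V \<noteq> {}\<close>], intro allI impI)
    fix A assume adm: "admissible V A"
    obtain x y where xy: "x \<in> S" "y \<in> S" "x \<noteq> y" "y \<in> block (A k) x"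
      using pigeonhole_block[OF adm fin S] by blast
    have "sqrt (2 ^ k * r) = 2 powr (real k / 2) * sqrt r"
      using powr_half_sqrt_powr[of 2 "real k"] by (simp add: powr_realpow real_sqrt_mult)
    also have "\<dots> \<le> 2 powr (real k / 2) * sqrt (R_eff V c x y)"
      using sep xy by (intro mult_left_mono) auto
    also have "\<dots> \<le> talagrand_sum V c A x (Suc k)"
      using talagrand_sum_ge[OF adm fin _ xy(4)] xy(1) S(1) by blast
    finally show "\<exists>x\<in>V. \<exists>n. sqrt (2 ^ k * r) \<le> talagrand_sum V c A x n"
      using xy(1) S(1) by blast
  qed
  then have "(sqrt (2 ^ k * r))^2 \<le> (gamma2 V c)^2"
    using r by (intro power_mono) auto
  then show ?thesis using r by simp
qed


section \<open>Effective resistance in a network\<close>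

lemma energy_nonneg:
  assumes "network V c"
  shows "0 \<le> energy V c f"
  using assms unfolding energy_def network_def by (auto intro!: sum_nonneg)

lemma edge_energy_bound:
  assumes net: "network V c" and ab: "a \<in> V" "b \<in> V"
  shows "c a b * (f a - f b)^2 \<le> 2 * energy V c f"
proof -
  have fin: "finite V" and nonneg: "\<And>x y. 0 \<le> c x y"
    using net unfolding network_def by auto
  have "c a b * (f a - f b)^2 \<le> (\<Sum>y\<in>V. c a y * (f a - f y)^2)"
    by (rule member_le_sum[where f = "\<lambda>y. c a y * (f a - f y)^2"]) (use ab fin nonneg in auto)
  also have "\<dots> \<le> (\<Sum>x\<in>V. \<Sum>y\<in>V. c x y * (f x - f y)^2)"
    by (rule member_le_sum[where f = "\<lambda>x. \<Sum>y\<in>V. c x y * (f x - f y)^2"])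
      (use ab fin nonneg in \<open>auto intro!: sum_nonneg\<close>)
  finally show ?thesis unfolding energy_def by simp
qed

lemma path_energy_bound:
  assumes net: "network V c" and delta: "0 < \<delta>"
    and path: "((\<lambda>a b. a \<in> V \<and> b \<in> V \<and> \<delta> \<le> c a b) ^^ n) x y"
  shows "\<bar>f x - f y\<bar> \<le> n * sqrt (2 * energy V c f / \<delta>)"
  using path
proof (induction n arbitrary: y)
  case 0
  then show ?case by simp
next
  case (Suc n)
  then obtain z where z: "((\<lambda>a b. a \<in> V \<and> b \<in> V \<and> \<delta> \<le> c a b) ^^ n) x z"
    and edge: "z \<in> V" "y \<in> V" "\<delta> \<le> c z y" by auto
  have "\<delta> * (f z - f y)^2 \<le> c z y * (f z - f y)^2"
    using edge(3) by (intro mult_right_mono) auto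
  also have "\<dots> \<le> 2 * energy V c f" by (rule edge_energy_bound[OF net edge(1,2)])
  finally have "\<bar>f z - f y\<bar>^2 \<le> 2 * energy V c f / \<delta>"
    using delta by (simp add: field_simps)
  then have "\<bar>f z - f y\<bar> \<le> sqrt (2 * energy V c f / \<delta>)" by (rule real_le_rsqrt)
  with Suc.IH[OF z] have "\<bar>f x - f z\<bar> + \<bar>f z - f y\<bar> \<le> Suc n * sqrt (2 * energy V c f / \<delta>)"
    by (simp add: algebra_simps)
  then show ?case by linarith
qed

text \<open>Connectivity keeps the energy of functions separating two vertices
  uniformly away from zero.\<close>

lemma energy_pos:
  assumes net: "network V c" and xy: "x \<in> V" "y \<in> V" "x \<noteq> y"
  shows "\<exists>\<epsilon>>0. \<forall>f. f x = 1 \<and> f y = 0 \<longrightarrow> \<epsilon> \<le> energy V c f"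
proof -
  define E where "E = {(a, b). a \<in> V \<and> b \<in> V \<and> 0 < c a b}"
  define \<delta> where "\<delta> = Min (insert 1 ((\<lambda>(a, b). c a b) ` E))"
  have "finite E"
    using net unfolding network_def E_def by (auto intro: finite_subset[of _ "V \<times> V"])
  then have delta: "0 < \<delta>"
    and delta_le: "\<And>a b. a \<in> V \<Longrightarrow> b \<in> V \<Longrightarrow> 0 < c a b \<Longrightarrow> \<delta> \<le> c a b"
    unfolding \<delta>_def by (auto simp: E_def intro!: Min_le)
  have "(\<lambda>a b. a \<in> V \<and> b \<in> V \<and> 0 < c a b)\<^sup>*\<^sup>* x y"
    using net xy unfolding network_def by blast
  then have "(\<lambda>a b. a \<in> V \<and> b \<in> V \<and> \<delta> \<le> c a b)\<^sup>*\<^sup>* x y"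
    by (rule rtranclp_mono[THEN predicate2D, rotated]) (auto intro: delta_le)
  then obtain n where path: "((\<lambda>a b. a \<in> V \<and> b \<in> V \<and> \<delta> \<le> c a b) ^^ n) x y"
    using rtranclp_imp_relpowp by metis
  have "n \<noteq> 0" using path xy(3) by (cases n) auto
  have "\<delta> / (2 * (real n)^2) \<le> energy V c f" if f: "f x = 1" "f y = 0" for f
  proof -
    have "1 \<le> n * sqrt (2 * energy V c f / \<delta>)"
      using path_energy_bound[OF net delta path, of f] f by simp
    then have "1 \<le> (n * sqrt (2 * energy V c f / \<delta>))^2"
      by (rule one_le_power)
    also have "\<dots> = (real n)^2 * (2 * energy V c f / \<delta>)"
      using energy_nonneg[OF net, of f] delta by (simp add: power_mult_distrib)
    finally have "\<delta> \<le> (real n)^2 * (2 * energy V c f)"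
      using delta by (simp add: field_simps)
    then show ?thesis using delta \<open>n \<noteq> 0\<close> by (simp add: field_simps)
  qed
  then show ?thesis using delta \<open>n \<noteq> 0\<close> by (intro exI[of _ "\<delta> / (2 * (real n)^2)"]) simp
qed

text \<open>The indicator function of v has energy c_v (loops carry no conductance).\<close>

lemma energy_indicator:
  assumes net: "network V c" and v: "v \<in> V"
  shows "energy V c (\<lambda>z. if z = v then 1 else 0) = cond_at V c v"
proof -
  have fin: "finite V" and sym: "\<And>x y. c x y = c y x" and loopless: "\<And>x. c x x = 0"
    using net unfolding network_def by auto
  have summand: "c x y * ((if x = v then 1 else 0) - (if y = v then 1 else 0))^2
      = (if x = v then c v y else 0) + (if y = v then c x v else 0)" for x y
    using loopless by (cases "x = v"; cases "y = v") auto
  have "(\<Sum>x\<in>V. \<Sum>y\<in>V. c x y * ((if x = v then 1 else 0) - (if y = v then 1 else (0::real)))^2)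
      = cond_at V c v + (\<Sum>x\<in>V. c x v)"
    unfolding summand sum.distrib using v fin by (simp add: cond_at_def if_distrib sum.If_cases)
  also have "\<dots> = 2 * cond_at V c v"
    using sym by (simp add: cond_at_def)
  finally show ?thesis unfolding energy_def by simp
qed

text \<open>Replacing f by 1 - f swaps the roles of the two endpoints at no cost.\<close>

lemma energy_complement: "energy V c (\<lambda>z. 1 - f z) = energy V c f"
proof -
  have "(1 - f x - (1 - f y))^2 = (f x - f y)^2" for x y :: 'a
    by (simp add: power2_eq_square algebra_simps)
  then show ?thesis unfolding energy_def by simp
qed

text \<open>Dirichlet principle with the indicator of x (resp. of the complement
  of y) as test function: the effective resistance between distinct
  vertices is at least the inverse conductance at either endpoint.\<close>

lemma R_eff_ge_inverse_cond:
  assumes net: "network V c" and xy: "x \<in> V" "y \<in> V" "x \<noteq> y"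
  shows "1 / cond_at V c x \<le> R_eff V c x y" "1 / cond_at V c y \<le> R_eff V c x y"
    and "0 < cond_at V c x"
proof -
  obtain \<epsilon> where \<epsilon>: "0 < \<epsilon>" "\<forall>f. f x = 1 \<and> f y = 0 \<longrightarrow> \<epsilon> \<le> energy V c f"
    using energy_pos[OF assms] by blast
  define Q where "Q = {energy V c f | f. f x = 1 \<and> f y = 0}"
  have in_x: "cond_at V c x \<in> Q"
    unfolding Q_def using energy_indicator[OF net xy(1)] xy(3)
    by (intro CollectI exI[of _ "\<lambda>z. if z = x then 1 else 0"]) auto
  have in_y: "cond_at V c y \<in> Q"
    unfolding Q_def using energy_indicator[OF net xy(2)] xy(3)
      energy_complement[of V c "\<lambda>z. if z = y then 1 else 0"]
    by (intro CollectI exI[of _ "\<lambda>z. 1 - (if z = y then 1 else 0)"]) auto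
  have bdd: "bdd_below Q" unfolding Q_def using \<epsilon>(2) by (intro bdd_belowI[of _ \<epsilon>]) auto
  have pos: "0 < Inf Q"
    using \<epsilon> in_x unfolding Q_def by (intro less_le_trans[OF \<epsilon>(1)] cInf_greatest) auto
  have R: "R_eff V c x y = 1 / Inf Q"
    unfolding R_eff_def Q_def using xy(3) by simp
  show "1 / cond_at V c x \<le> R_eff V c x y" "1 / cond_at V c y \<le> R_eff V c x y"
    unfolding R using pos cInf_lower[OF in_x bdd] cInf_lower[OF in_y bdd]
    by (auto intro!: divide_left_mono)
  show "0 < cond_at V c x" using pos cInf_lower[OF in_x bdd] by linarith
qed


section \<open>Conductances measured in units of gamma2\<close>

text \<open>Fact (a): every vertex has c_v gamma2^2 \<ge> 1.  Two distinct
  vertices at resistance at least 1/c_v already exceed M_0 = 1.\<close>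

lemma cond_gamma2_ge_one:
  assumes net: "network V c" and two: "2 \<le> card V" and v: "v \<in> V"
  shows "1 \<le> cond_at V c v * (gamma2 V c)^2"
proof -
  have fin: "finite V" using net unfolding network_def by simp
  obtain w where w: "w \<in> V" "w \<noteq> v"
  proof (cases "V \<subseteq> {v}")
    case True
    then have "card V \<le> 1" using card_mono[of "{v}" V] by simp
    then show ?thesis using two by simp
  qed blast
  have cond_pos: "0 < cond_at V c v"
    using R_eff_ge_inverse_cond(3)[OF net v w(1) w(2)[symmetric]] .
  have "2 ^ 0 * (1 / cond_at V c v) \<le> (gamma2 V c)^2"
  proof (rule separated_set_gamma2[OF fin])
    show "{v, w} \<subseteq> V" "M_card 0 < card {v, w}"
      using v w by (auto simp: M_card_def)
    show "\<forall>x\<in>{v, w}. \<forall>y\<in>{v, w}. x \<noteq> y \<longrightarrow> 1 / cond_at V c v \<le> R_eff V c x y"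
      using R_eff_ge_inverse_cond(1,2)[OF net] v w by blast
  qed (use cond_pos in simp)
  then show ?thesis using cond_pos by (simp add: field_simps)
qed

text \<open>Fact (b): at most 4^j vertices have c_v gamma2^2 \<le> j.  They
  are pairwise at resistance at least gamma2^2 / j, so there can be
  at most M_k of them as soon as 2^k > j.\<close>

lemma level_set_card:
  assumes net: "network V c" and two: "2 \<le> card V" and j: "1 \<le> j"
  shows "card {v\<in>V. cond_at V c v * (gamma2 V c)^2 \<le> real j} \<le> 4 ^ j"
proof -
  define S where "S = {v\<in>V. cond_at V c v * (gamma2 V c)^2 \<le> real j}"
  define r where "r = (gamma2 V c)^2 / j"
  have fin: "finite V" using net unfolding network_def by simp
  have "V \<noteq> {}" using two by auto
  then obtain v0 where "v0 \<in> V" by blast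
  have "1 \<le> cond_at V c v0 * (gamma2 V c)^2"
    by (rule cond_gamma2_ge_one[OF net two \<open>v0 \<in> V\<close>])
  then have gamma_pos: "0 < (gamma2 V c)^2" by (cases "gamma2 V c = 0") auto
  obtain k0 where k0: "2 ^ k0 \<le> j" "j < 2 ^ (k0 + 1)"
    using ex_power_ivl1[of 2 j] j by auto
  have sep: "\<forall>x\<in>S. \<forall>y\<in>S. x \<noteq> y \<longrightarrow> r \<le> R_eff V c x y"
  proof (intro ballI impI)
    fix x y assume xy: "x \<in> S" "y \<in> S" "x \<noteq> y"
    then have "x \<in> V" "y \<in> V" and level: "cond_at V c x * (gamma2 V c)^2 \<le> j"
      unfolding S_def by auto
    note R = R_eff_ge_inverse_cond[OF net \<open>x \<in> V\<close> \<open>y \<in> V\<close> xy(3)]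
    have "r \<le> 1 / cond_at V c x"
      unfolding r_def using level R(3) j by (simp add: field_simps)
    then show "r \<le> R_eff V c x y" using R(1) by linarith
  qed
  have "card S \<le> M_card (Suc k0)"
  proof (rule ccontr)
    assume "\<not> card S \<le> M_card (Suc k0)"
    then have "M_card (Suc k0) < card S" by simp
    moreover have "S \<subseteq> V" "0 \<le> r" unfolding S_def r_def by auto
    ultimately have "2 ^ Suc k0 * r \<le> (gamma2 V c)^2"
      using separated_set_gamma2[OF fin _ _ _ sep] by blast
    then have "(2::real) ^ Suc k0 \<le> real j"
      using gamma_pos j unfolding r_def by (simp add: field_simps)
    also have "real j < 2 ^ Suc k0"
      using k0(2) by (metis Suc_eq_plus1 of_nat_less_iff of_nat_numeral of_nat_power)
    finally show False by simp
  qed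
  also have "M_card (Suc k0) = 2 ^ (2 ^ Suc k0)" by (simp add: M_card_def)
  also have "\<dots> \<le> 2 ^ (2 * j)"
    using k0(1) by (intro power_increasing) auto
  also have "(2::nat) ^ (2 * j) = 4 ^ j" by (simp add: power_mult)
  finally show ?thesis unfolding S_def .
qed


section \<open>The summation estimate\<close>

lemma sum_by_level:
  fixes g :: "nat \<Rightarrow> real" and m :: "'a \<Rightarrow> nat"
  assumes fin: "finite V" and g: "\<And>j. 0 \<le> g j"
    and level: "\<And>j. j \<in> m ` V \<Longrightarrow> real (card {v\<in>V. m v = j}) \<le> b j"
  shows "(\<Sum>v\<in>V. g (m v)) \<le> (\<Sum>j\<in>m ` V. b j * g j)"
proof -
  have "(\<Sum>v\<in>V. g (m v)) = (\<Sum>j\<in>m ` V. \<Sum>v\<in>{v\<in>V. m v = j}. g (m v))"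
    by (rule sum.image_gen[OF fin])
  also have "\<dots> = (\<Sum>j\<in>m ` V. real (card {v\<in>V. m v = j}) * g j)"
    by (rule sum.cong) auto
  also have "\<dots> \<le> (\<Sum>j\<in>m ` V. b j * g j)"
    using level g by (intro sum_mono mult_right_mono) auto
  finally show ?thesis .
qed

lemma nat_ceiling_bounds:
  fixes s :: real
  assumes "1 \<le> s"
  shows "1 \<le> nat \<lceil>s\<rceil>" "s \<le> real (nat \<lceil>s\<rceil>)" "real (nat \<lceil>s\<rceil>) - 1 \<le> s"
proof -
  have "1 \<le> \<lceil>s\<rceil>" using assms by (metis ceiling_mono ceiling_one)
  then have eq: "real (nat \<lceil>s\<rceil>) = of_int \<lceil>s\<rceil>" by simp
  show "1 \<le> nat \<lceil>s\<rceil>" using \<open>1 \<le> \<lceil>s\<rceil>\<close> by arith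
  show "s \<le> real (nat \<lceil>s\<rceil>)" unfolding eq by (rule le_of_int_ceiling)
  show "real (nat \<lceil>s\<rceil>) - 1 \<le> s" unfolding eq by (rule of_int_ceiling_diff_one_le)
qed

lemma exp_split:
  fixes s u :: real
  assumes s: "1 \<le> s" and u: "16 \<le> u"
  shows "exp (- u * s) \<le> exp (- u / 8) * exp (- 14 * (real (nat \<lceil>s\<rceil>) - 1))"
proof -
  have "(u - 14) * 1 \<le> (u - 14) * s" using s u by (intro mult_left_mono) auto
  moreover have "real (nat \<lceil>s\<rceil>) - 1 \<le> s"
    by (rule nat_ceiling_bounds(3)[OF s])
  ultimately have "- u * s \<le> - u / 8 + - 14 * (real (nat \<lceil>s\<rceil>) - 1)"
    using u by (simp add: algebra_simps)
  then show ?thesis by (simp add: exp_add[symmetric])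
qed

lemma geometric_term:
  assumes "1 \<le> j"
  shows "4 ^ j * exp (- 14 * (real j - 1)) \<le> 8 * (1/2::real) ^ j"
proof -
  obtain i where j: "j = Suc i" using assms by (cases j) auto
  have "8 \<le> exp (14::real)" using exp_ge_add_one_self[of 14] by linarith
  then have "4 * exp (-14::real) \<le> 1/2" by (simp add: exp_minus field_simps)
  then have "(4 * exp (-14::real)) ^ i \<le> (1/2) ^ i" by (intro power_mono) auto
  moreover have "exp (- 14 * (real j - 1)) = exp (-14) ^ i"
    using exp_of_nat_mult[of i "-14::real"] unfolding j by (simp add: algebra_simps)
  ultimately show ?thesis unfolding j by (simp add: power_mult_distrib)
qed

lemma exp_sum_bound:
  fixes s :: "'a \<Rightarrow> real"
  assumes fin: "finite V" and s: "\<And>v. v \<in> V \<Longrightarrow> 1 \<le> s v"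
    and level: "\<And>j. 1 \<le> j \<Longrightarrow> card {v\<in>V. s v \<le> real j} \<le> 4 ^ j"
    and u: "16 \<le> u"
  shows "(\<Sum>v\<in>V. exp (- u * s v)) \<le> 16 * exp (- u / 8)"
proof -
  define m where "m = (\<lambda>v. nat \<lceil>s v\<rceil>)"
  define g where "g = (\<lambda>j::nat. exp (- 14 * (real j - 1)))"
  have m_pos: "1 \<le> m v" and s_le_m: "s v \<le> real (m v)" if "v \<in> V" for v
    using nat_ceiling_bounds[OF s[OF that]] unfolding m_def by auto
  have level_m: "real (card {v\<in>V. m v = j}) \<le> 4 ^ j" if "j \<in> m ` V" for j
  proof -
    have "{v\<in>V. m v = j} \<subseteq> {v\<in>V. s v \<le> real j}"
      using s_le_m by auto
    then have "card {v\<in>V. m v = j} \<le> card {v\<in>V. s v \<le> real j}"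
      using fin by (intro card_mono) auto
    also have "\<dots> \<le> 4 ^ j"
      using level m_pos that by auto
    finally show ?thesis by (metis of_nat_le_iff of_nat_numeral of_nat_power)
  qed
  have "(\<Sum>v\<in>V. exp (- u * s v)) \<le> (\<Sum>v\<in>V. exp (- u / 8) * g (m v))"
    unfolding g_def m_def using s u by (intro sum_mono exp_split) auto
  also have "\<dots> = exp (- u / 8) * (\<Sum>v\<in>V. g (m v))" by (simp add: sum_distrib_left)
  also have "(\<Sum>v\<in>V. g (m v)) \<le> (\<Sum>j\<in>m ` V. 4 ^ j * g j)"
    by (rule sum_by_level[OF fin _ level_m]) (simp add: g_def)
  also have "\<dots> \<le> (\<Sum>j\<in>m ` V. 8 * (1/2) ^ j)"
    unfolding g_def using m_pos by (intro sum_mono geometric_term) auto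
  also have "\<dots> = 8 * (\<Sum>j\<in>m ` V. (1/2::real) ^ j)" by (simp add: sum_distrib_left)
  also have "(\<Sum>j\<in>m ` V. (1/2::real) ^ j) \<le> (\<Sum>j. (1/2) ^ j)"
    by (rule sum_le_suminf) (use fin in auto)
  also have "(\<Sum>j. (1/2::real) ^ j) = 2" using suminf_geometric[of "1/2::real"] by simp
  finally show ?thesis by (simp add: mult_left_mono)
qed


theorem mainTheorem12:
  shows "\<exists>K::real. \<forall>(V::nat set) c. network V c \<and> card V \<ge> 2 \<longrightarrow>
     (\<forall>u::real. u \<ge> 16 \<longrightarrow>
        (\<Sum>v\<in>V. exp (- u * cond_at V c v * (gamma2 V c)^2)) \<le> K * exp (- u / 8))"
proof (intro exI[of _ 16] allI impI)
  fix V :: "nat set" and c and u :: real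
  assume "network V c \<and> card V \<ge> 2" and u: "16 \<le> u"
  then have net: "network V c" and two: "2 \<le> card V" by auto
  have "(\<Sum>v\<in>V. exp (- u * (cond_at V c v * (gamma2 V c)^2))) \<le> 16 * exp (- u / 8)"
  proof (rule exp_sum_bound[OF _ _ _ u])
    show "finite V" using net unfolding network_def by simp
    show "\<And>v. v \<in> V \<Longrightarrow> 1 \<le> cond_at V c v * (gamma2 V c)^2"
      by (rule cond_gamma2_ge_one[OF net two])
    show "\<And>j. 1 \<le> j \<Longrightarrow> card {v\<in>V. cond_at V c v * (gamma2 V c)^2 \<le> real j} \<le> 4 ^ j"
      by (rule level_set_card[OF net two])
  qed
  then show "(\<Sum>v\<in>V. exp (- u * cond_at V c v * (gamma2 V c)^2)) \<le> 16 * exp (- u / 8)"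
    by (simp add: mult.assoc)
qed

end
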